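(* Let $\gamma_a,\gamma_s>0$, $\sigma_B>0$, $q>0$, $\lambda>0$, $\varepsilon_a\in(0,2)$, and let $\beta_s$ be the piecewise linear coalbedo described in the context. Then the system \[ \gamma_a T_a'=-\lambda(T_a-T_s)+\varepsilon_a\sigma_B|T_s|^3T_s-2\varepsilon_a\sigma_B|T_a|^3T_a,\qquad \gamma_s T_s'=-\lambda(T_s-T_a)-\sigma_B|T_s|^3T_s+\varepsilon_a\sigma_B|T_a|^3T_a+q\beta_s(T_s) \] has at least one equilibrium point.
   Context: The coalbedo is $\beta_s(T)=\beta_{s,-}$ for $T\le T_{s,-}$, $\beta_s(T)=\beta_{s,-}+(\beta_{s,+}-\beta_{s,-})\frac{T-T_{s,-}}{T_{s,+}-T_{s,-}}$ for $T\in[T_{s,-},T_{s,+}]$, and $\beta_s(T)=\beta_{s,+}$ for $T\ge T_{s,+}$, where $T_{s,+}>T_{s,-}>0$ and $\beta_{s,+}>\beta_{s,-}>0$. An equilibrium point is a point $(T_a,T_s)\in[0,\infty)^2$ at which both right-hand sides vanish. *)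

theory Defs
  imports Complex_Main
begin

definition coalbedo :: "real \<Rightarrow> real \<Rightarrow> real \<Rightarrow> real \<Rightarrow> real \<Rightarrow> real" where
  "coalbedo Tm Tp bm bp T =
     (if T \<le> Tm then bm
      else if T \<le> Tp then bm + (bp - bm) * (T - Tm) / (Tp - Tm)
      else bp)"

end

theory Submission
  imports Defs
begin

text \<open>The first equation determines \<open>T\<^sub>a\<close> from \<open>T\<^sub>s \<ge> 0\<close>: with
  \<open>a = \<epsilon>\<^sub>a \<sigma>\<^sub>B\<close> it reads \<open>\<lambda> T\<^sub>a + 2a T\<^sub>a\<^sup>4 = \<lambda> T\<^sub>s + a T\<^sub>s\<^sup>4\<close>, whose left side
  is strictly increasing, so it has a unique solution \<open>0 \<le> T\<^sub>a(T\<^sub>s) \<le> T\<^sub>s\<close>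
  depending continuously on \<open>T\<^sub>s\<close>. Substituting it into the second equation leaves
  a continuous function of \<open>T\<^sub>s\<close> alone, which is \<open>q \<beta>\<^sub>s,\<^sub>- > 0\<close> at \<open>T\<^sub>s = 0\<close>
  and nonpositive for large \<open>T\<^sub>s\<close>, because \<open>\<epsilon>\<^sub>a < 2\<close> leaves the net loss
  \<open>\<sigma>\<^sub>B (1 - \<epsilon>\<^sub>a/2) T\<^sub>s\<^sup>4\<close> at the surface while the coalbedo is bounded.
  The intermediate value theorem gives a zero.\<close>

lemma coalbedo_eq_clamp:
  assumes "Tm < Tp"
  shows "coalbedo Tm Tp bm bp T = bm + (bp - bm) * max 0 (min 1 ((T - Tm) / (Tp - Tm)))"
  using assms by (auto simp: coalbedo_def divide_le_eq_1 divide_nonpos_pos)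

lemma continuous_on_coalbedo:
  assumes "Tm < Tp"
  shows "continuous_on S (coalbedo Tm Tp bm bp)"
  unfolding coalbedo_eq_clamp[OF assms, abs_def]
  by (intro continuous_intros) (use assms in auto)

lemma coalbedo_le_upper:
  assumes "Tm < Tp" "bm < bp"
  shows "coalbedo Tm Tp bm bp T \<le> bp"
proof -
  have "(bp - bm) * max 0 (min 1 ((T - Tm) / (Tp - Tm))) \<le> bp - bm"
    using assms(2) by (intro mult_left_le) auto
  then show ?thesis
    unfolding coalbedo_eq_clamp[OF assms(1)] by simp
qed

lemma coalbedo_forcing_le_quartic:
  assumes "Tm < Tp" "bm < bp" "0 \<le> q" "0 \<le> c" "1 \<le> T" "q * bp \<le> c * T"
  shows "q * coalbedo Tm Tp bm bp T \<le> c * T ^ 4"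
proof -
  have "q * coalbedo Tm Tp bm bp T \<le> q * bp"
    using coalbedo_le_upper[OF assms(1,2)] assms(3) by (intro mult_left_mono) auto
  also have "\<dots> \<le> c * T"
    by (fact assms(6))
  also have "\<dots> \<le> c * T ^ 4"
    using assms(4,5) by (simp add: mult_left_mono self_le_power)
  finally show ?thesis .
qed

lemma continuous_solution_strict_mono_equation:
  fixes k h :: "real \<Rightarrow> real"
  assumes "a \<le> b" "continuous_on {a..b} k" "strict_mono_on {a..b} k" "continuous_on {a..b} h"
    and h_bounds: "\<And>x. x \<in> {a..b} \<Longrightarrow> k a \<le> h x \<and> h x \<le> k x"
  shows "\<exists>g. continuous_on {a..b} g \<and> (\<forall>x\<in>{a..b}. a \<le> g x \<and> g x \<le> x \<and> k (g x) = h x)"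
proof -
  define g where "g x = inv_into {a..b} k (h x)" for x
  have k_inj: "inj_on k {a..b}"
    using assms(3) by (rule strict_mono_on_imp_inj_on)
  have h_in_range: "h x \<in> k ` {a..b}" if x: "x \<in> {a..b}" for x
  proof -
    have "k x \<le> k b"
      using x assms(1,3) by (simp add: strict_mono_on_less_eq)
    then obtain y where "a \<le> y" "y \<le> b" "k y = h x"
      using IVT'[of k a "h x" b] h_bounds[OF x] assms(1,2) by auto
    then show ?thesis by (metis atLeastAtMost_iff image_eqI)
  qed
  have "continuous_on (k ` {a..b}) (inv_into {a..b} k)"
    using assms(2) by (rule continuous_on_inv) (auto simp: inv_into_f_f[OF k_inj])
  then have "continuous_on {a..b} g"
    unfolding g_def using assms(4) by (rule continuous_on_compose2) (use h_in_range in blast)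
  moreover have "a \<le> g x \<and> g x \<le> x \<and> k (g x) = h x" if x: "x \<in> {a..b}" for x
  proof -
    have g_in: "g x \<in> {a..b}" and k_g: "k (g x) = h x"
      unfolding g_def using h_in_range[OF x] by (rule inv_into_into, rule f_inv_into_f)
    have "g x \<le> x"
      using k_g h_bounds[OF x] strict_mono_on_less_eq[OF assms(3) g_in x] by simp
    with g_in k_g show ?thesis by simp
  qed
  ultimately show ?thesis by blast
qed

lemma atmosphere_temperature_exists:
  fixes lam c R :: real
  assumes "0 < lam" "0 < c" "0 \<le> R"
  shows "\<exists>Ta. continuous_on {0..R} Ta \<and>
    (\<forall>x\<in>{0..R}. 0 \<le> Ta x \<and> Ta x \<le> x \<and> lam * Ta x + 2 * c * Ta x ^ 4 = lam * x + c * x ^ 4)"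
proof (rule continuous_solution_strict_mono_equation)
  show "strict_mono_on {0..R} (\<lambda>x. lam * x + 2 * c * x ^ 4)"
  proof (rule strict_mono_onI)
    fix x y :: real
    assume "x \<in> {0..R}" "x < y"
    then have "x ^ 4 < y ^ 4" by (intro power_strict_mono) auto
    with \<open>x < y\<close> show "lam * x + 2 * c * x ^ 4 < lam * y + 2 * c * y ^ 4"
      using assms(1,2) by (smt (verit) mult_strict_left_mono)
  qed
next
  fix x
  assume "x \<in> {0..R}"
  then show "lam * 0 + 2 * c * 0 ^ 4 \<le> lam * x + c * x ^ 4 \<and>
      lam * x + c * x ^ 4 \<le> lam * x + 2 * c * x ^ 4"
    using assms(1,2) by simp
qed (use assms(3) in \<open>simp, (intro continuous_intros)+\<close>)

lemma surface_balance_nonpos: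
  fixes lam s e t T b :: real
  assumes "0 \<le> lam" "t \<le> T"
    and atmosphere: "lam * t + 2 * (e * s) * t ^ 4 = lam * T + e * s * T ^ 4"
    and "b \<le> s * (1 - e / 2) * T ^ 4"
  shows "- lam * (T - t) - s * T ^ 4 + e * s * t ^ 4 + b \<le> 0"
proof -
  \<comment> \<open>half of the atmospheric balance eliminates \<open>t\<^sup>4\<close>\<close>
  have "e * s * t ^ 4 = (lam * (T - t) + e * s * T ^ 4) / 2"
    using atmosphere by (simp add: algebra_simps)
  then have "- lam * (T - t) - s * T ^ 4 + e * s * t ^ 4 + b
      = - lam * (T - t) / 2 - s * (1 - e / 2) * T ^ 4 + b"
    by (simp add: field_simps)
  also have "\<dots> \<le> 0"
    using assms(1,2,4) mult_nonneg_nonneg[of lam "T - t"] by linarith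
  finally show ?thesis .
qed

theorem lemma6p1:
  fixes gamma_a gamma_s sigma_B q lam eps_a Tm Tp bm bp :: real
  assumes "gamma_a > 0" "gamma_s > 0" "sigma_B > 0" "q > 0" "lam > 0"
    and "0 < eps_a" "eps_a < 2"
    and "0 < Tm" "Tm < Tp" "0 < bm" "bm < bp"
  shows "\<exists>Ta Ts. Ta \<ge> 0 \<and> Ts \<ge> 0 \<and>
     - lam * (Ta - Ts) + eps_a * sigma_B * \<bar>Ts\<bar>^3 * Ts - 2 * eps_a * sigma_B * \<bar>Ta\<bar>^3 * Ta = 0 \<and>
     - lam * (Ts - Ta) - sigma_B * \<bar>Ts\<bar>^3 * Ts + eps_a * sigma_B * \<bar>Ta\<bar>^3 * Ta
       + q * coalbedo Tm Tp bm bp Ts = 0"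
proof -
  define c where "c = sigma_B * (1 - eps_a / 2)"
  define R where "R = 1 + q * bp / c"
  have "0 < c"
    using assms by (simp add: c_def)
  then have "1 \<le> R" "q * bp \<le> c * R"
    using assms by (simp_all add: R_def field_simps)
  obtain Ta where Ta_cont: "continuous_on {0..R} Ta" and Ta:
    "\<And>x. x \<in> {0..R} \<Longrightarrow> 0 \<le> Ta x \<and> Ta x \<le> x \<and>
       lam * Ta x + 2 * (eps_a * sigma_B) * Ta x ^ 4 = lam * x + eps_a * sigma_B * x ^ 4"
    using atmosphere_temperature_exists[of lam "eps_a * sigma_B" R] assms \<open>1 \<le> R\<close> by auto
  define F where "F x = - lam * (x - Ta x) - sigma_B * x ^ 4 + eps_a * sigma_B * Ta x ^ 4
    + q * coalbedo Tm Tp bm bp x" for x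
  have "continuous_on {0..R} F"
    unfolding F_def using assms(9) Ta_cont
    by (intro continuous_intros continuous_on_coalbedo)
  moreover have "0 \<le> F 0"
  proof -
    have "Ta 0 = 0"
      using Ta[of 0] \<open>1 \<le> R\<close> by simp
    then show ?thesis
      using assms(4,8,10) by (simp add: F_def coalbedo_def)
  qed
  moreover have "F R \<le> 0"
    unfolding F_def using Ta[of R] \<open>1 \<le> R\<close> assms(5)
    by (intro surface_balance_nonpos coalbedo_forcing_le_quartic[unfolded c_def])
      (use assms \<open>0 < c\<close> \<open>q * bp \<le> c * R\<close> in \<open>auto simp: c_def\<close>)
  ultimately obtain Ts where "0 \<le> Ts" "Ts \<le> R" "F Ts = 0"
    using IVT2'[of F R 0 0] \<open>1 \<le> R\<close> by auto
  with Ta[of Ts] show ?thesis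
    by - (rule exI[of _ "Ta Ts"], rule exI[of _ Ts],
      simp add: F_def power_numeral_reduce algebra_simps)
qed

end
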